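(* Let $(X,\mathcal{O}(X))$ be a measurable space, $\mathcal{A}$ a unital $C^*$-algebra and $\mathcal{H}$ a Hilbert space. Every spectral instrument $\mathcal{I}:\mathcal{O}(X)\to CP(\mathcal{A},\mathcal{B}(\mathcal{H}))$ is a $C^*$-extreme point of $I_{\mathcal{H}}(X,\mathcal{A})$.
   Context: A CP instrument is a map $\mathcal{I}$ from $\mathcal{O}(X)$ to the completely positive maps $\mathcal{A}\to\mathcal{B}(\mathcal{H})$ such that for all $a\in\mathcal{A}$, $h,k\in\mathcal{H}$, $A\mapsto\langle h,\mathcal{I}(A)(a)k\rangle$ is a countably additive complex measure. It is UCP if $\mathcal{I}(X)(1_\mathcal{A})=I_\mathcal{H}$; $I_{\mathcal{H}}(X,\mathcal{A})$ is the set of UCP instruments. It is spectral if it is UCP and $\mathcal{I}(A)$ is a $*$-homomorphism for every $A\in\mathcal{O}(X)$. $\mathcal{I}$ is $C^*$-extreme if whenever $\mathcal{I}(\cdot)=\sum_{i=1}^nT_i^*\mathcal{I}_i(\cdot)T_i$ with $\mathcal{I}_i\in I_{\mathcal{H}}(X,\mathcal{A})$ and invertible $T_i\in\mathcal{B}(\mathcal{H})$, $\sum T_i^*T_i=I_\mathcal{H}$, there are unitaries $U_i$ with $\mathcal{I}_i(\cdot)=U_i^*\mathcal{I}(\cdot)U_i$ for all $i$. *)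

theory Defs
  imports "HOL-Analysis.Analysis"
begin

class complex_vector = ab_group_add +
  fixes scaleC :: "complex \<Rightarrow> 'a \<Rightarrow> 'a"
  assumes scaleC_add_right: "scaleC a (x + y) = scaleC a x + scaleC a y"
    and scaleC_add_left: "scaleC (a + b) x = scaleC a x + scaleC b x"
    and scaleC_scaleC: "scaleC a (scaleC b x) = scaleC (a * b) x"
    and scaleC_one: "scaleC 1 x = x"

text \<open>Complex Hilbert space: complete complex inner product space
  (inner product conjugate-linear in the first, linear in the second argument).\<close>
class chilbert = complex_vector + banach +
  fixes cinner :: "'a \<Rightarrow> 'a \<Rightarrow> complex"
  assumes scaleR_scaleC_h: "scaleR r x = scaleC (complex_of_real r) x"
    and cinner_commute: "cinner x y = cnj (cinner y x)"
    and cinner_add_right: "cinner x (y + z) = cinner x y + cinner x z"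
    and cinner_scaleC_right: "cinner x (scaleC a y) = a * cinner x y"
    and cinner_ge_zero: "0 \<le> Re (cinner x x)"
    and cinner_eq_zero_iff: "cinner x x = 0 \<longleftrightarrow> x = 0"
    and norm_eq_sqrt_cinner: "norm x = sqrt (Re (cinner x x))"

class cstar_algebra = complex_vector + real_normed_algebra_1 + banach +
  fixes cstar :: "'a \<Rightarrow> 'a"
  assumes scaleR_scaleC_a: "scaleR r x = scaleC (complex_of_real r) x"
    and norm_scaleC: "norm (scaleC a x) = cmod a * norm x"
    and scaleC_mult_left: "scaleC a x * y = scaleC a (x * y)"
    and scaleC_mult_right: "x * scaleC a y = scaleC a (x * y)"
    and cstar_cstar: "cstar (cstar x) = x"
    and cstar_add: "cstar (x + y) = cstar x + cstar y"
    and cstar_mult: "cstar (x * y) = cstar y * cstar x"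
    and cstar_scaleC: "cstar (scaleC a x) = scaleC (cnj a) (cstar x)"
    and cstar_identity: "norm (cstar x * x) = (norm x)\<^sup>2"

definition clinear :: "('a::complex_vector \<Rightarrow> 'b::complex_vector) \<Rightarrow> bool" where
  "clinear f \<longleftrightarrow> (\<forall>a x y. f (x + y) = f x + f y \<and> f (scaleC a x) = scaleC a (f x))"

definition bounded_op :: "('h::chilbert \<Rightarrow> 'h) \<Rightarrow> bool" where
  "bounded_op T \<longleftrightarrow> clinear T \<and> (\<exists>K. \<forall>x. norm (T x) \<le> K * norm x)"

definition adjoint :: "('h::chilbert \<Rightarrow> 'h) \<Rightarrow> ('h \<Rightarrow> 'h)" where
  "adjoint T = (THE S. \<forall>x y. cinner (S x) y = cinner x (T y))"

definition invertible_op :: "('h::chilbert \<Rightarrow> 'h) \<Rightarrow> bool" where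
  "invertible_op T \<longleftrightarrow> bounded_op T \<and> (\<exists>S. bounded_op S \<and> S \<circ> T = id \<and> T \<circ> S = id)"

definition unitary_op :: "('h::chilbert \<Rightarrow> 'h) \<Rightarrow> bool" where
  "unitary_op U \<longleftrightarrow> bounded_op U \<and> adjoint U \<circ> U = id \<and> U \<circ> adjoint U = id"

text \<open>Completely positive maps A -> B(H): linear, B(H)-valued, and for every n the
  amplification phi_n : M_n(A) -> M_n(B(H)) = B(H^n) maps positive matrices B* B
  (B in M_n(A)) to positive operators on H^n.\<close>
definition cp_map :: "('a::cstar_algebra \<Rightarrow> 'h::chilbert \<Rightarrow> 'h) \<Rightarrow> bool" where
  "cp_map \<phi> \<longleftrightarrow>
     (\<forall>c x y. \<phi> (x + y) = (\<lambda>h. \<phi> x h + \<phi> y h) \<and> \<phi> (scaleC c x) = (\<lambda>h. scaleC c (\<phi> x h))) \<and> (\<forall>a. bounded_op (\<phi> a)) \<and>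
     (\<forall>(n::nat) (B::nat \<Rightarrow> nat \<Rightarrow> 'a) (h::nat \<Rightarrow> 'h).
        let s = (\<Sum>i<n. \<Sum>j<n. cinner (h i) (\<phi> (\<Sum>k<n. cstar (B k i) * B k j) (h j)))
        in s \<in> \<real> \<and> 0 \<le> Re s)"

definition complex_countably_additive :: "'x measure \<Rightarrow> ('x set \<Rightarrow> complex) \<Rightarrow> bool" where
  "complex_countably_additive M \<mu> \<longleftrightarrow>
     (\<forall>F::nat \<Rightarrow> 'x set. range F \<subseteq> sets M \<longrightarrow> disjoint_family F \<longrightarrow>
        (\<lambda>n. \<mu> (F n)) sums \<mu> (\<Union>n. F n))"

definition cp_instrument :: "'x measure \<Rightarrow> ('x set \<Rightarrow> 'a::cstar_algebra \<Rightarrow> 'h::chilbert \<Rightarrow> 'h) \<Rightarrow> bool" where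
  "cp_instrument M I \<longleftrightarrow> (\<forall>A\<in>sets M. cp_map (I A)) \<and>
     (\<forall>a h k. complex_countably_additive M (\<lambda>A. cinner h (I A a k)))"

definition ucp_instrument :: "'x measure \<Rightarrow> ('x set \<Rightarrow> 'a::cstar_algebra \<Rightarrow> 'h::chilbert \<Rightarrow> 'h) \<Rightarrow> bool" where
  "ucp_instrument M I \<longleftrightarrow> cp_instrument M I \<and> I (space M) 1 = id"

definition spectral_instrument :: "'x measure \<Rightarrow> ('x set \<Rightarrow> 'a::cstar_algebra \<Rightarrow> 'h::chilbert \<Rightarrow> 'h) \<Rightarrow> bool" where
  "spectral_instrument M I \<longleftrightarrow> ucp_instrument M I \<and>
     (\<forall>A\<in>sets M. \<forall>a b. I A (a * b) = I A a \<circ> I A b \<and> I A (cstar a) = adjoint (I A a))"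

definition cstar_extreme :: "'x measure \<Rightarrow> ('x set \<Rightarrow> 'a::cstar_algebra \<Rightarrow> 'h::chilbert \<Rightarrow> 'h) \<Rightarrow> bool" where
  "cstar_extreme M I \<longleftrightarrow>
     (\<forall>(n::nat) (Is::nat \<Rightarrow> 'x set \<Rightarrow> 'a \<Rightarrow> 'h \<Rightarrow> 'h) (T::nat \<Rightarrow> 'h \<Rightarrow> 'h).
        (\<forall>i<n. ucp_instrument M (Is i) \<and> invertible_op (T i)) \<and>
        (\<lambda>h. \<Sum>i<n. adjoint (T i) (T i h)) = id \<and>
        (\<forall>A\<in>sets M. \<forall>a. I A a = (\<lambda>h. \<Sum>i<n. adjoint (T i) (Is i A a (T i h))))
        \<longrightarrow> (\<exists>U::nat \<Rightarrow> 'h \<Rightarrow> 'h. \<forall>i<n. unitary_op (U i) \<and>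
               (\<forall>A\<in>sets M. \<forall>a. Is i A a = (\<lambda>h. adjoint (U i) (I A a (U i h))))))"

end

theory Submission
  imports Defs
begin

text \<open>Let \<open>I = \<Sum>\<^sub>i T\<^sub>i\<^sup>* I\<^sub>i T\<^sub>i\<close>. Each \<open>I\<^sub>i(A)\<close> is a CP map with \<open>I\<^sub>i(A)(1) \<le> 1\<close>, so it satisfies the
  Kadison-Schwarz inequality \<open>I\<^sub>i(A)(a)\<^sup>* I\<^sub>i(A)(a) \<le> I\<^sub>i(A)(a\<^sup>* a)\<close>. Compressed by the \<open>T\<^sub>i\<close> and
  summed, these inequalities add up to one for \<open>I(A)\<close>, which is an equality because \<open>I(A)\<close> is a
  \<open>*\<close>-homomorphism; hence \<open>T\<^sub>i I(A)(a) = I\<^sub>i(A)(a) T\<^sub>i\<close>. Then \<open>T\<^sub>i\<^sup>* T\<^sub>i\<close> commutes with the range of \<open>I\<close>,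
  and so does its square root \<open>|T\<^sub>i|\<close>. The polar decomposition \<open>T\<^sub>i = U\<^sub>i\<^sup>* |T\<^sub>i|\<close> with the unitary
  \<open>U\<^sub>i = |T\<^sub>i| T\<^sub>i\<^sup>-\<^sup>1\<close> turns \<open>I\<^sub>i = T\<^sub>i I T\<^sub>i\<^sup>-\<^sup>1\<close> into \<open>I\<^sub>i = U\<^sub>i\<^sup>* I U\<^sub>i\<close>.\<close>

section \<open>Hilbert spaces\<close>

interpretation scaleC_right: additive "\<lambda>x. scaleC a x :: 'a::complex_vector"
  by standard (rule scaleC_add_right)

interpretation cinner_left: additive "\<lambda>x::'h::chilbert. cinner x y"
  by standard (metis cinner_add_right cinner_commute complex_cnj_add)

interpretation cinner_right: additive "\<lambda>y::'h::chilbert. cinner x y"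
  by standard (rule cinner_add_right)

lemma cinner_scaleC_left: "cinner (scaleC a x) (y::'h::chilbert) = cnj a * cinner x y"
  by (metis cinner_commute cinner_scaleC_right complex_cnj_cnj complex_cnj_mult)

lemma cinner_scaleR_left: "cinner (scaleR r x) (y::'h::chilbert) = of_real r * cinner x y"
  by (simp add: scaleR_scaleC_h cinner_scaleC_left)

lemma cinner_scaleR_right: "cinner x (scaleR r (y::'h::chilbert)) = of_real r * cinner x y"
  by (simp add: scaleR_scaleC_h cinner_scaleC_right)

lemma cinner_self: "cinner x x = complex_of_real ((norm (x::'h::chilbert))\<^sup>2)"
proof -
  have "Im (cinner x x) = 0"
    using arg_cong[OF cinner_commute[of x x], of Im] by simp
  moreover have "Re (cinner x x) = (norm x)\<^sup>2"
    using norm_eq_sqrt_cinner[of x] cinner_ge_zero[of x] by simp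
  ultimately show ?thesis by (simp add: complex_eq_iff)
qed

lemma cinner_self_Re: "Re (cinner x x) = (norm (x::'h::chilbert))\<^sup>2"
  by (simp add: cinner_self)

lemma cinner_ext: "(\<And>u. cinner u x = cinner u y) \<Longrightarrow> x = (y::'h::chilbert)"
  by (metis cinner_right.diff cinner_eq_zero_iff eq_iff_diff_eq_0)

lemma norm_diff_squared:
  "(norm (x - y))\<^sup>2 = (norm x)\<^sup>2 - 2 * Re (cinner x y) + (norm (y::'h::chilbert))\<^sup>2"
proof -
  have "Re (cinner y x) = Re (cinner x y)"
    by (metis cinner_commute complex_cnj_cancel_iff cnj.sel(1))
  then show ?thesis
    by (simp add: cinner_self_Re[symmetric] cinner_left.diff cinner_right.diff)
qed

lemma norm_add_squared:
  "(norm (x + y))\<^sup>2 = (norm x)\<^sup>2 + 2 * Re (cinner x y) + (norm (y::'h::chilbert))\<^sup>2"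
  using norm_diff_squared[of x "- y"] by (simp add: cinner_right.minus)

lemma parallelogram_law:
  "(norm (x - y))\<^sup>2 + (norm (x + y))\<^sup>2 = 2 * (norm x)\<^sup>2 + 2 * (norm (y::'h::chilbert))\<^sup>2"
  by (simp add: norm_diff_squared norm_add_squared)

lemma norm_scaleC_hilbert: "norm (scaleC a (x::'h::chilbert)) = cmod a * norm x"
proof -
  have "complex_of_real ((norm (scaleC a x))\<^sup>2) = cnj a * a * cinner x x"
    unfolding cinner_self[symmetric] by (simp add: cinner_scaleC_left cinner_scaleC_right)
  also have "\<dots> = complex_of_real ((cmod a * norm x)\<^sup>2)"
    by (simp add: cinner_self complex_norm_square[symmetric] power_mult_distrib mult.commute)
  finally have "(norm (scaleC a x))\<^sup>2 = (cmod a * norm x)\<^sup>2"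
    by (simp only: of_real_eq_iff)
  then show ?thesis
    by (rule power2_eq_imp_eq) simp_all
qed

lemma Cauchy_Schwarz_cinner: "cmod (cinner x y) \<le> norm x * norm (y::'h::chilbert)"
proof (cases "y = 0")
  case True
  then show ?thesis by (simp add: cinner_right.zero)
next
  case False
  define N where "N = (norm y)\<^sup>2"
  define c where "c = cinner y x"
  have N: "N > 0" using False by (simp add: N_def)
  have "cinner x y = cnj c" by (metis c_def cinner_commute)
  define t where "t = c / N"
  have "cinner (x - scaleC t y) (x - scaleC t y)
      = cinner x x - t * cinner x y - cnj t * cinner y x + cnj t * t * cinner y y"
    by (simp add: cinner_left.diff cinner_right.diff cinner_scaleC_left cinner_scaleC_right
        algebra_simps)
  also have "\<dots> = cinner x x - c * cnj c / N"
    using N \<open>cinner x y = cnj c\<close>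
    by (simp add: t_def c_def[symmetric] cinner_self N_def[symmetric] field_simps)
  finally have "cinner (x - scaleC t y) (x - scaleC t y) = cinner x x - c * cnj c / N" .
  then have "0 \<le> (norm x)\<^sup>2 - (cmod c)\<^sup>2 / N"
    using cinner_ge_zero[of "x - scaleC t y"]
    by (simp add: cinner_self_Re complex_norm_square[symmetric])
  then have "(cmod c)\<^sup>2 \<le> (norm x)\<^sup>2 * N"
    using N by (simp add: field_simps)
  then have "(cmod c)\<^sup>2 \<le> (norm x * norm y)\<^sup>2"
    by (simp add: N_def power_mult_distrib)
  then have "cmod c \<le> norm x * norm y"
    by (rule power2_le_imp_le) simp
  then show ?thesis
    using \<open>cinner x y = cnj c\<close> by simp
qed

lemma bounded_bilinear_cinner: "bounded_bilinear (cinner :: 'h::chilbert \<Rightarrow> 'h \<Rightarrow> complex)"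
proof
  show "\<exists>K. \<forall>x y::'h. norm (cinner x y) \<le> norm x * norm y * K"
    using Cauchy_Schwarz_cinner by (metis mult.right_neutral)
qed (simp_all add: cinner_left.add cinner_right.add cinner_scaleR_left cinner_scaleR_right
      scaleR_conv_of_real)

lemma convex_minimizing_sequence_Cauchy:
  fixes C :: "'h::chilbert set"
  assumes "convex C" and xs: "\<And>n. xs n \<in> C"
    and d: "\<And>x. x \<in> C \<Longrightarrow> d \<le> (norm x)\<^sup>2"
    and xs_d: "\<And>n. (norm (xs n))\<^sup>2 \<le> d + 1 / Suc n"
  shows "Cauchy xs"
proof (rule CauchyI)
  fix e :: real
  assume "0 < e"
  obtain M :: nat where M: "4 / e\<^sup>2 < M"
    using reals_Archimedean2 by blast
  have "M > 0"
    using M \<open>0 < e\<close> by (metis divide_pos_pos of_nat_0_less_iff order.strict_trans zero_less_numeral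
        zero_less_power)
  have "norm (xs m - xs n) < e" if "M \<le> m" "M \<le> n" for m n
  proof -
    have "scaleR (1/2) (xs m + xs n) \<in> C"
      using convexD[OF \<open>convex C\<close> xs xs, of "1/2" "1/2"] by (simp add: scaleR_add_right)
    then have "4 * d \<le> (norm (xs m + xs n))\<^sup>2"
      using d by (fastforce simp: power2_eq_square)
    then have "(norm (xs m - xs n))\<^sup>2 \<le> 2 * (1 / Suc m) + 2 * (1 / Suc n)"
      using parallelogram_law[of "xs m" "xs n"] xs_d[of m] xs_d[of n] by linarith
    also have "\<dots> \<le> 4 / M"
      using frac_le[of 1 1 M "Suc m"] frac_le[of 1 1 M "Suc n"] that \<open>M > 0\<close> by simp
    also have "\<dots> < e\<^sup>2"
      using M \<open>M > 0\<close> \<open>0 < e\<close> by (simp add: field_simps)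
    finally show ?thesis
      using \<open>0 < e\<close> by (simp add: power_less_imp_less_base)
  qed
  then show "\<exists>M. \<forall>m\<ge>M. \<forall>n\<ge>M. norm (xs m - xs n) < e"
    by blast
qed

lemma min_norm_point_exists:
  fixes C :: "'h::chilbert set"
  assumes "closed C" "convex C" "C \<noteq> {}"
  shows "\<exists>z\<in>C. \<forall>x\<in>C. norm z \<le> norm x"
proof -
  define d where "d = Inf ((\<lambda>x. (norm x)\<^sup>2) ` C)"
  have d: "d \<le> (norm x)\<^sup>2" if "x \<in> C" for x
    unfolding d_def using that by (intro cInf_lower bdd_belowI[where m=0]) auto
  have "\<exists>x\<in>C. (norm x)\<^sup>2 < d + 1 / Suc n" for n
    using cInf_lessD[of "(\<lambda>x. (norm x)\<^sup>2) ` C" "d + 1 / Suc n"] \<open>C \<noteq> {}\<close>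
    unfolding d_def[symmetric] by auto
  then obtain xs where xs: "\<And>n. xs n \<in> C" and xs_d: "\<And>n. (norm (xs n))\<^sup>2 < d + 1 / Suc n"
    by metis
  have "Cauchy xs"
    by (rule convex_minimizing_sequence_Cauchy[OF \<open>convex C\<close> xs d less_imp_le[OF xs_d]])
  then obtain z where z: "xs \<longlonglongrightarrow> z"
    using Cauchy_convergent_iff convergent_def by blast
  have "z \<in> C"
    using closed_sequentially[OF \<open>closed C\<close> xs z] .
  have "(\<lambda>n. d + 1 / Suc n) \<longlonglongrightarrow> d + 0"
    by (intro tendsto_add tendsto_const LIMSEQ_Suc[OF lim_inverse_n'])
  then have "(norm z)\<^sup>2 \<le> d"
    using xs_d by (intro LIMSEQ_le[OF tendsto_power[OF tendsto_norm[OF z]]]) (auto intro: less_imp_le)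
  then show ?thesis
    using \<open>z \<in> C\<close> d by (meson norm_ge_zero order_trans power2_le_imp_le)
qed

lemma min_norm_orthogonal:
  fixes z u :: "'h::chilbert"
  assumes "\<And>t. norm z \<le> norm (z + scaleC t u)"
  shows "cinner z u = 0"
proof (cases "u = 0")
  case True
  then show ?thesis by (simp add: cinner_right.zero)
next
  case False
  define N where "N = (norm u)\<^sup>2"
  define b where "b = cinner u z"
  define t where "t = - b / N"
  have "N > 0" using False by (simp add: N_def)
  have "cinner z u = cnj b" by (metis b_def cinner_commute)
  have "(norm z)\<^sup>2 \<le> (norm (z + scaleC t u))\<^sup>2"
    using assms by (simp add: power_mono)
  also have "\<dots> = (norm z)\<^sup>2 + 2 * Re (t * cnj b) + (cmod t)\<^sup>2 * N"
    by (simp add: norm_add_squared cinner_scaleC_right norm_scaleC_hilbert power_mult_distrib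
        N_def \<open>cinner z u = cnj b\<close>)
  also have "\<dots> = (norm z)\<^sup>2 - (cmod b)\<^sup>2 / N"
    using \<open>N > 0\<close>
    by (simp add: t_def norm_divide power_divide complex_norm_square[symmetric] power2_eq_square
        field_simps)
  finally have "(cmod b)\<^sup>2 / N \<le> 0" by simp
  then show ?thesis
    using \<open>N > 0\<close> \<open>cinner z u = cnj b\<close> by (simp add: divide_le_0_iff)
qed

lemma functional_orthogonal_to_kernel_exists:
  fixes f :: "'h::chilbert \<Rightarrow> complex"
  assumes "bounded_linear f" "\<And>a x. f (scaleC a x) = a * f x" "f x0 \<noteq> 0"
  shows "\<exists>z. f z = 1 \<and> (\<forall>u. f u = 0 \<longrightarrow> cinner z u = 0)"
proof -
  interpret f: bounded_linear f by fact
  define C where "C = f -` {1}"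
  have "closed C"
    unfolding C_def by (intro closed_vimage linear_continuous_on assms(1)) simp
  moreover have "convex C"
    unfolding C_def by (intro convex_linear_vimage f.linear_axioms) simp
  moreover have "scaleC (1 / f x0) x0 \<in> C"
    using assms(2,3) by (simp add: C_def)
  ultimately have "\<exists>z\<in>C. \<forall>x\<in>C. norm z \<le> norm x"
    by (intro min_norm_point_exists) auto
  then obtain z where "z \<in> C" and z: "\<And>x. x \<in> C \<Longrightarrow> norm z \<le> norm x"
    by blast
  have "cinner z u = 0" if "f u = 0" for u
  proof (rule min_norm_orthogonal)
    fix t
    have "z + scaleC t u \<in> C"
      using \<open>z \<in> C\<close> that assms(2) by (simp add: C_def f.add)
    then show "norm z \<le> norm (z + scaleC t u)"
      by (rule z)
  qed
  then show ?thesis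
    using \<open>z \<in> C\<close> by (auto simp: C_def)
qed

lemma Riesz_representation:
  fixes f :: "'h::chilbert \<Rightarrow> complex"
  assumes add: "\<And>x y. f (x + y) = f x + f y"
    and scaleC: "\<And>a x. f (scaleC a x) = a * f x"
    and bound: "\<And>x. cmod (f x) \<le> K * norm x"
  shows "\<exists>y. \<forall>x. f x = cinner y x"
proof (cases "\<forall>x. f x = 0")
  case True
  then show ?thesis by (auto intro: exI[of _ 0] simp: cinner_left.zero)
next
  case False
  then obtain x0 where "f x0 \<noteq> 0" by blast
  have "bounded_linear f"
    by (rule bounded_linear_intro[where K=K])
      (simp_all add: add scaleR_scaleC_h scaleC scaleR_conv_of_real bound mult.commute)
  then obtain z where "f z = 1" and orth: "\<And>u. f u = 0 \<Longrightarrow> cinner z u = 0"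
    using functional_orthogonal_to_kernel_exists[OF _ scaleC \<open>f x0 \<noteq> 0\<close>] by blast
  have "z \<noteq> 0"
    using \<open>f z = 1\<close> scaleC[of 0 0] by (auto simp: scaleC_right.zero)
  have "f x = cinner (scaleC (1 / (norm z)\<^sup>2) z) x" for x
  proof -
    have "f (x - scaleC (f x) z) = 0"
      using \<open>f z = 1\<close> linear_diff[OF bounded_linear.linear[OF \<open>bounded_linear f\<close>]]
      by (simp add: scaleC)
    then have "cinner z (x - scaleC (f x) z) = 0"
      by (rule orth)
    then have "cinner z x = f x * (norm z)\<^sup>2"
      by (simp add: cinner_right.diff cinner_scaleC_right cinner_self)
    then show ?thesis
      using \<open>z \<noteq> 0\<close> by (simp add: cinner_scaleC_left)
  qed
  then show ?thesis by blast
qed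

section \<open>Bounded operators and adjoints\<close>

lemma bounded_op_iff:
  "bounded_op (T::'h::chilbert \<Rightarrow> 'h) \<longleftrightarrow>
     bounded_linear T \<and> (\<forall>a x. T (scaleC a x) = scaleC a (T x))"
proof
  assume "bounded_op T"
  then obtain K where "clinear T" "\<And>x. norm (T x) \<le> K * norm x"
    by (auto simp: bounded_op_def)
  then show "bounded_linear T \<and> (\<forall>a x. T (scaleC a x) = scaleC a (T x))"
    by (auto simp: clinear_def scaleR_scaleC_h mult.commute intro!: bounded_linear_intro[where K=K])
next
  assume "bounded_linear T \<and> (\<forall>a x. T (scaleC a x) = scaleC a (T x))"
  then show "bounded_op T"
    using bounded_linear.bounded[of T]
    by (auto simp: bounded_op_def clinear_def linear_add bounded_linear.linear mult.commute)
qed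

lemma bounded_op_bounded_linear: "bounded_op T \<Longrightarrow> bounded_linear T"
  by (simp add: bounded_op_iff)

lemma bounded_op_linear: "bounded_op T \<Longrightarrow> linear T"
  by (simp add: bounded_op_iff bounded_linear.linear)

lemma bounded_op_scaleC: "bounded_op T \<Longrightarrow> T (scaleC a x) = scaleC a (T x)"
  by (simp add: bounded_op_iff)

lemma bounded_op_ident: "bounded_op (\<lambda>h::'h::chilbert. h)"
  by (simp add: bounded_op_iff)

lemma bounded_op_zero: "bounded_op (\<lambda>h::'h::chilbert. 0)"
  by (simp add: bounded_op_iff scaleC_right.zero)

lemma bounded_op_scalar: "bounded_op (\<lambda>h::'h::chilbert. scaleC a h)"
  unfolding bounded_op_def clinear_def
  by (auto simp: scaleC_right.add scaleC_scaleC mult.commute norm_scaleC_hilbert intro: exI[of _ "cmod a"])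

lemma bounded_op_compose: "bounded_op S \<Longrightarrow> bounded_op T \<Longrightarrow> bounded_op (\<lambda>h. S (T h))"
  by (simp add: bounded_op_iff bounded_linear_compose)

lemma bounded_op_add: "bounded_op S \<Longrightarrow> bounded_op T \<Longrightarrow> bounded_op (\<lambda>h. S h + T h)"
  by (simp add: bounded_op_iff bounded_linear_add scaleC_right.add)

lemma bounded_op_scaleR:
  assumes "bounded_op T"
  shows "bounded_op (\<lambda>h. scaleR r (T h))"
proof -
  have "bounded_linear (\<lambda>h. scaleR r (T h))"
    using bounded_linear_compose[OF bounded_linear_scaleR_right bounded_op_bounded_linear[OF assms]] .
  moreover have "scaleR r (T (scaleC a x)) = scaleC a (scaleR r (T x))" for a x
    using assms by (simp add: bounded_op_scaleC scaleR_scaleC_h scaleC_scaleC mult.commute)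
  ultimately show ?thesis
    by (simp add: bounded_op_iff)
qed

lemma bounded_op_diff: "bounded_op S \<Longrightarrow> bounded_op T \<Longrightarrow> bounded_op (\<lambda>h. S h - T h)"
  using bounded_op_add[of S "\<lambda>h. scaleR (-1) (T h)"] bounded_op_scaleR[of T "-1"] by simp

lemma adjoint_eqI:
  assumes "\<And>x y. cinner (S x) y = cinner x (T y)"
  shows "adjoint T = (S :: 'h::chilbert \<Rightarrow> 'h)"
  unfolding adjoint_def
proof (rule the_equality)
  fix S'
  assume "\<forall>x y. cinner (S' x) y = cinner x (T y)"
  then show "S' = S"
    using assms by (metis cinner_commute cinner_ext ext)
qed (use assms in blast)

lemma cinner_adjoint:
  assumes "bounded_op (T::'h::chilbert \<Rightarrow> 'h)"
  shows "cinner (adjoint T x) y = cinner x (T y)"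
proof -
  obtain K where K: "\<And>x. norm (T x) \<le> norm x * K"
    using bounded_linear.bounded[OF bounded_op_bounded_linear[OF assms]] by blast
  have "\<exists>z. \<forall>y. cinner x (T y) = cinner z y" for x
  proof (rule Riesz_representation[where K="norm x * K"])
    show "cmod (cinner x (T y)) \<le> norm x * K * norm y" for y
      using Cauchy_Schwarz_cinner[of x "T y"] K[of y] norm_ge_zero[of x]
      by (metis mult.assoc mult.commute mult_left_mono order_trans)
  qed (simp_all add: assms linear_add bounded_op_linear bounded_op_scaleC cinner_right.add
      cinner_scaleC_right)
  then obtain S where "\<And>x y. cinner (S x) y = cinner x (T y)"
    by metis
  then show ?thesis
    using adjoint_eqI by metis
qed

lemma cinner_adjoint_right:
  "bounded_op (T::'h::chilbert \<Rightarrow> 'h) \<Longrightarrow> cinner x (adjoint T y) = cinner (T x) y"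
  by (metis cinner_adjoint cinner_commute)

lemma bounded_op_adjoint:
  assumes "bounded_op (T::'h::chilbert \<Rightarrow> 'h)"
  shows "bounded_op (adjoint T)"
proof -
  obtain K where K: "K \<ge> 0" "\<And>x. norm (T x) \<le> norm x * K"
    using bounded_linear.nonneg_bounded[OF bounded_op_bounded_linear[OF assms]] by blast
  have "norm (adjoint T y) \<le> K * norm y" for y
  proof -
    have "(norm (adjoint T y))\<^sup>2 \<le> cmod (cinner y (T (adjoint T y)))"
      using complex_Re_le_cmod by (simp add: cinner_self_Re[symmetric] cinner_adjoint[OF assms])
    also have "\<dots> \<le> norm y * (norm (adjoint T y) * K)"
      using Cauchy_Schwarz_cinner K by (metis mult_left_mono norm_ge_zero order_trans)
    finally show ?thesis
      using K(1) by (cases "adjoint T y = 0") (simp_all add: power2_eq_square algebra_simps)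
  qed
  moreover have "adjoint T (x + y) = adjoint T x + adjoint T y" for x y
    by (rule cinner_ext) (simp add: cinner_adjoint_right[OF assms] cinner_right.add)
  moreover have "adjoint T (scaleC a x) = scaleC a (adjoint T x)" for a x
    by (rule cinner_ext) (simp add: cinner_adjoint_right[OF assms] cinner_scaleC_right)
  ultimately show ?thesis
    by (auto simp: bounded_op_def clinear_def)
qed

section \<open>Square roots of operators\<close>

definition selfadjoint :: "('h::chilbert \<Rightarrow> 'h) \<Rightarrow> bool" where
  "selfadjoint T \<longleftrightarrow> (\<forall>x y. cinner (T x) y = cinner x (T y))"

text \<open>A fixed point \<open>X = (Q + X\<^sup>2) / 2\<close> of this iteration satisfies \<open>(id - X)\<^sup>2 = id - Q\<close>.\<close>

fun sqrt_iter :: "('h::chilbert \<Rightarrow> 'h) \<Rightarrow> nat \<Rightarrow> 'h \<Rightarrow> 'h" where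
  "sqrt_iter Q 0 = (\<lambda>h. 0)"
| "sqrt_iter Q (Suc n) = (\<lambda>h. scaleR (1/2) (Q h + sqrt_iter Q n (sqrt_iter Q n h)))"

lemma bounded_op_sqrt_iter: "bounded_op Q \<Longrightarrow> bounded_op (sqrt_iter Q n)"
  by (induction n)
    (simp_all add: bounded_op_zero bounded_op_scaleR bounded_op_add bounded_op_compose)

lemma selfadjoint_sqrt_iter: "selfadjoint Q \<Longrightarrow> selfadjoint (sqrt_iter Q n)"
  by (induction n)
    (simp_all add: selfadjoint_def cinner_left.zero cinner_right.zero cinner_scaleR_left
      cinner_scaleR_right cinner_left.add cinner_right.add)

lemma sqrt_iter_commute:
  assumes "bounded_op C" "\<And>h. C (Q h) = Q (C h)"
  shows "C (sqrt_iter Q n h) = sqrt_iter Q n (C h)"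
  using bounded_op_linear[OF assms(1)]
  by (induction n arbitrary: h) (simp_all add: assms(2) linear_0 linear_add linear_scale)

lemma norm_sqrt_iter_le:
  assumes Q: "\<And>h. norm (Q h) \<le> r * norm h" and "0 \<le> \<rho>" "r + \<rho>\<^sup>2 \<le> 2 * \<rho>"
  shows "norm (sqrt_iter Q n h) \<le> \<rho> * norm h"
proof (induction n arbitrary: h)
  case 0
  then show ?case using \<open>0 \<le> \<rho>\<close> by simp
next
  case (Suc n)
  have "norm (sqrt_iter Q n (sqrt_iter Q n h)) \<le> \<rho> * (\<rho> * norm h)"
    using Suc[of "sqrt_iter Q n h"] Suc[of h] \<open>0 \<le> \<rho>\<close> by (meson mult_left_mono order_trans)
  then have "norm (sqrt_iter Q (Suc n) h) \<le> (r * norm h + \<rho> * (\<rho> * norm h)) / 2"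
    using norm_triangle_ineq[of "Q h" "sqrt_iter Q n (sqrt_iter Q n h)"] Q[of h] by simp
  also have "\<dots> \<le> \<rho> * norm h"
    using mult_right_mono[OF assms(3), of "norm h"] by (simp add: power2_eq_square algebra_simps)
  finally show ?case .
qed

lemma norm_sqrt_iter_step_le:
  assumes "bounded_op Q" "\<And>h. norm (Q h) \<le> r * norm h" "0 \<le> \<rho>" "r + \<rho>\<^sup>2 \<le> 2 * \<rho>"
  shows "norm (sqrt_iter Q (Suc n) h - sqrt_iter Q n h) \<le> \<rho> ^ Suc n * norm h"
proof (induction n arbitrary: h)
  case 0
  have "r \<le> 2 * \<rho>"
    using assms(4) by (smt (verit) zero_le_power2)
  then have "norm (Q h) \<le> 2 * \<rho> * norm h"
    using assms(2)[of h] by (meson mult_right_mono norm_ge_zero order_trans)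
  then show ?case
    by simp
next
  case (Suc n)
  define Y where "Y = sqrt_iter Q (Suc n)"
  define Z where "Z = sqrt_iter Q n"
  have "linear Y"
    unfolding Y_def using bounded_op_linear[OF bounded_op_sqrt_iter[OF assms(1)]] .
  have "sqrt_iter Q (Suc (Suc n)) h - Y h = scaleR (1/2) (Y (Y h) - Z (Z h))"
    by (simp add: Y_def Z_def algebra_simps)
  also have "\<dots> = scaleR (1/2) (Y (Y h - Z h) + (Y (Z h) - Z (Z h)))"
    by (simp add: linear_diff[OF \<open>linear Y\<close>])
  finally have "sqrt_iter Q (Suc (Suc n)) h - Y h = \<dots>" .
  moreover have "norm (Y (Y h - Z h)) \<le> \<rho> ^ Suc (Suc n) * norm h"
  proof -
    have "norm (Y (Y h - Z h)) \<le> \<rho> * norm (Y h - Z h)"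
      unfolding Y_def by (rule norm_sqrt_iter_le[OF assms(2-4)])
    also have "\<dots> \<le> \<rho> * (\<rho> ^ Suc n * norm h)"
      using Suc[of h] \<open>0 \<le> \<rho>\<close> unfolding Y_def Z_def by (rule mult_left_mono)
    finally show ?thesis by simp
  qed
  moreover have "norm (Y (Z h) - Z (Z h)) \<le> \<rho> ^ Suc (Suc n) * norm h"
  proof -
    have "norm (Y (Z h) - Z (Z h)) \<le> \<rho> ^ Suc n * norm (Z h)"
      unfolding Y_def Z_def by (rule Suc)
    also have "\<dots> \<le> \<rho> ^ Suc n * (\<rho> * norm h)"
      using \<open>0 \<le> \<rho>\<close> unfolding Z_def by (intro mult_left_mono norm_sqrt_iter_le[OF assms(2-4)]) simp
    finally show ?thesis by (simp add: algebra_simps)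
  qed
  ultimately have "norm (sqrt_iter Q (Suc (Suc n)) h - Y h) \<le> \<rho> ^ Suc (Suc n) * norm h"
    using norm_triangle_ineq[of "Y (Y h - Z h)" "Y (Z h) - Z (Z h)"]
    by (simp del: sqrt_iter.simps)
  then show ?case
    unfolding Y_def .
qed

lemma sqrt_iter_convergent:
  assumes "bounded_op Q" "\<And>h. norm (Q h) \<le> r * norm h" "0 \<le> \<rho>" "\<rho> < 1" "r + \<rho>\<^sup>2 \<le> 2 * \<rho>"
  shows "convergent (\<lambda>n. sqrt_iter Q n h)"
proof -
  have "summable (\<lambda>n. \<rho> ^ Suc n * norm h)"
    using assms(3,4) by (simp add: summable_mult summable_mult2 summable_geometric)
  then have "summable (\<lambda>n. norm (sqrt_iter Q (Suc n) h - sqrt_iter Q n h))"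
    by (rule summable_comparison_test'[where N=0])
      (simp only: norm_ge_zero real_norm_def abs_of_nonneg norm_sqrt_iter_step_le[OF assms(1-3,5)])
  then have "summable (\<lambda>n. sqrt_iter Q (Suc n) h - sqrt_iter Q n h)"
    by (rule summable_norm_cancel)
  then have "convergent (\<lambda>n. \<Sum>i<n. sqrt_iter Q (Suc i) h - sqrt_iter Q i h)"
    using summable_LIMSEQ unfolding convergent_def by blast
  then show ?thesis
    by (simp add: sum_lessThan_telescope[of "\<lambda>i. sqrt_iter Q i h"] del: sqrt_iter.simps(2))
qed

lemma bounded_op_pointwise_limit:
  assumes "\<And>n. bounded_op (X n)" "\<And>n h. norm (X n h) \<le> K * norm h"
    and lim: "\<And>h. (\<lambda>n. X n h) \<longlonglongrightarrow> L h"
  shows "bounded_op L"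
proof -
  have "(\<lambda>n. X n (x + y)) \<longlonglongrightarrow> L x + L y" for x y
    using tendsto_add[OF lim lim] assms(1) by (simp add: linear_add bounded_op_linear)
  then have "L (x + y) = L x + L y" for x y
    using lim LIMSEQ_unique by blast
  moreover have "(\<lambda>n. X n (scaleC a x)) \<longlonglongrightarrow> scaleC a (L x)" for a x
    using bounded_linear.tendsto[OF bounded_op_bounded_linear[OF bounded_op_scalar] lim] assms(1)
    by (simp add: bounded_op_scaleC)
  then have "L (scaleC a x) = scaleC a (L x)" for a x
    using lim LIMSEQ_unique by blast
  moreover have "norm (L h) \<le> K * norm h" for h
    using assms(2) by (intro LIMSEQ_le_const2[OF tendsto_norm[OF lim]]) auto
  ultimately show ?thesis
    by (auto simp: bounded_op_def clinear_def)
qed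

lemma selfadjoint_pointwise_limit:
  assumes "\<And>n. selfadjoint (X n)" and lim: "\<And>h. (\<lambda>n. X n h) \<longlonglongrightarrow> L h"
  shows "selfadjoint L"
  unfolding selfadjoint_def
proof (intro allI)
  fix x y
  have "(\<lambda>n. cinner (X n x) y) \<longlonglongrightarrow> cinner (L x) y"
    by (rule bounded_bilinear.tendsto[OF bounded_bilinear_cinner lim tendsto_const])
  moreover have "(\<lambda>n. cinner (X n x) y) \<longlonglongrightarrow> cinner x (L y)"
    using bounded_bilinear.tendsto[OF bounded_bilinear_cinner tendsto_const lim] assms(1)
    by (simp add: selfadjoint_def)
  ultimately show "cinner (L x) y = cinner x (L y)"
    by (rule LIMSEQ_unique)
qed

lemma pointwise_limit_commute:
  assumes "bounded_op C" "\<And>n h. C (X n h) = X n (C h)" and lim: "\<And>h. (\<lambda>n. X n h) \<longlonglongrightarrow> L h"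
  shows "C (L h) = L (C h)"
proof -
  have "(\<lambda>n. C (X n h)) \<longlonglongrightarrow> C (L h)"
    by (rule bounded_linear.tendsto[OF bounded_op_bounded_linear[OF assms(1)] lim])
  then show ?thesis
    using lim[of "C h"] assms(2) LIMSEQ_unique by simp
qed

lemma sqrt_iter_limit_fixed_point:
  assumes "bounded_op Q" "\<And>h. norm (Q h) \<le> r * norm h" "0 \<le> \<rho>" "r + \<rho>\<^sup>2 \<le> 2 * \<rho>"
    and lim: "\<And>h. (\<lambda>n. sqrt_iter Q n h) \<longlonglongrightarrow> X h"
  shows "scaleR 2 (X h) = Q h + X (X h)"
proof -
  let ?X = "sqrt_iter Q"
  have "(\<lambda>n. ?X n (?X n h - X h)) \<longlonglongrightarrow> 0"
  proof (rule Lim_null_comparison)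
    show "\<forall>\<^sub>F n in sequentially. norm (?X n (?X n h - X h)) \<le> \<rho> * norm (?X n h - X h)"
      using norm_sqrt_iter_le[OF assms(2-4)] by simp
    show "(\<lambda>n. \<rho> * norm (?X n h - X h)) \<longlonglongrightarrow> 0"
      using tendsto_mult_right_zero[OF tendsto_norm_zero[OF lim[THEN LIM_zero]]] .
  qed
  then have "(\<lambda>n. ?X n (?X n h - X h) + ?X n (X h)) \<longlonglongrightarrow> 0 + X (X h)"
    using lim by (rule tendsto_add)
  then have "(\<lambda>n. ?X n (?X n h)) \<longlonglongrightarrow> X (X h)"
    using bounded_op_linear[OF bounded_op_sqrt_iter[OF assms(1)]] by (simp add: linear_diff)
  then have "(\<lambda>n. scaleR (1/2) (Q h + ?X n (?X n h))) \<longlonglongrightarrow> scaleR (1/2) (Q h + X (X h))"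
    by (intro tendsto_intros)
  then have "(\<lambda>n. ?X (Suc n) h) \<longlonglongrightarrow> scaleR (1/2) (Q h + X (X h))"
    by simp
  then have "X h = scaleR (1/2) (Q h + X (X h))"
    using LIMSEQ_Suc[OF lim] LIMSEQ_unique by blast
  then show ?thesis
    by (metis scaleR_half_double scaleR_2 scaleR_right_distrib)
qed

lemma sqrt_id_minus_exists:
  fixes Q :: "'h::chilbert \<Rightarrow> 'h"
  assumes "bounded_op Q" "selfadjoint Q" "\<And>h. norm (Q h) \<le> r * norm h" "0 \<le> r" "r < 1"
  shows "\<exists>R. bounded_op R \<and> selfadjoint R \<and> (\<forall>h. R (R h) = h - Q h) \<and>
           (\<forall>C. bounded_op C \<longrightarrow> (\<forall>h. C (Q h) = Q (C h)) \<longrightarrow> (\<forall>h. C (R h) = R (C h)))"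
proof -
  \<comment> \<open>the smaller root of \<open>\<rho>\<^sup>2 - 2\<rho> + r\<close>: a bound on the iterates and their contraction rate\<close>
  define \<rho> where "\<rho> = 1 - sqrt (1 - r)"
  have \<rho>: "0 \<le> \<rho>" "\<rho> < 1" "r + \<rho>\<^sup>2 \<le> 2 * \<rho>"
    using assms(4,5) by (auto simp: \<rho>_def power2_eq_square algebra_simps)
  define X where "X h = lim (\<lambda>n. sqrt_iter Q n h)" for h
  have lim: "(\<lambda>n. sqrt_iter Q n h) \<longlonglongrightarrow> X h" for h
    using sqrt_iter_convergent[OF assms(1,3) \<rho>] by (simp add: X_def convergent_LIMSEQ_iff)
  have "bounded_op X"
    using bounded_op_sqrt_iter[OF assms(1)] norm_sqrt_iter_le[OF assms(3) \<rho>(1,3)] lim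
    by (rule bounded_op_pointwise_limit)
  define R where "R h = h - X h" for h
  have "bounded_op R"
    unfolding R_def by (rule bounded_op_diff[OF bounded_op_ident \<open>bounded_op X\<close>])
  moreover have "selfadjoint R"
    using selfadjoint_pointwise_limit[OF selfadjoint_sqrt_iter[OF assms(2)] lim]
    by (simp add: selfadjoint_def R_def cinner_left.diff cinner_right.diff)
  moreover have "R (R h) = h - Q h" for h
  proof -
    have X_diff: "X (h - X h) = X h - X (X h)"
      by (rule linear_diff[OF bounded_op_linear[OF \<open>bounded_op X\<close>]])
    have Q_eq: "Q h = X h + X h - X (X h)"
      using sqrt_iter_limit_fixed_point[OF assms(1,3) \<rho>(1,3) lim, of h]
      by (simp add: scaleR_2 eq_diff_eq)
    show ?thesis
      unfolding R_def X_diff Q_eq by (simp add: algebra_simps)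
  qed
  moreover have "C (R h) = R (C h)" if "bounded_op C" "\<And>h. C (Q h) = Q (C h)" for C h
    using pointwise_limit_commute[of C "sqrt_iter Q", OF that(1) sqrt_iter_commute[of C Q, OF that] lim]
      linear_diff[OF bounded_op_linear[OF that(1)]]
    by (simp add: R_def)
  ultimately show ?thesis
    by blast
qed

section \<open>Polar decomposition\<close>

lemma norm_id_minus_scaled_gram_le:
  fixes T :: "'h::chilbert \<Rightarrow> 'h"
  assumes "bounded_op T" "1 \<le> K" "\<And>x. norm (adjoint T x) \<le> K * norm x"
    and "1 \<le> L" "\<And>h. norm h \<le> L * norm (T h)"
  shows "norm (h - scaleR (1 / K\<^sup>2) (adjoint T (T h))) \<le> sqrt (1 - 1 / (K * L)\<^sup>2) * norm h"
proof -
  define t where "t = (norm (T h))\<^sup>2"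
  define p where "p = (norm (adjoint T (T h)))\<^sup>2"
  have "p \<le> K\<^sup>2 * t"
    unfolding p_def t_def power_mult_distrib[symmetric] using assms(3) by (simp add: power_mono)
  moreover have "(norm h)\<^sup>2 \<le> L\<^sup>2 * t"
    unfolding t_def power_mult_distrib[symmetric] using assms(5) by (simp add: power_mono)
  moreover have "(norm (h - scaleR (1 / K\<^sup>2) (adjoint T (T h))))\<^sup>2
      = (norm h)\<^sup>2 - 2 * t / K\<^sup>2 + p / (K\<^sup>2)\<^sup>2"
    using assms(2)
    by (simp add: norm_diff_squared cinner_scaleR_right cinner_adjoint_right[OF assms(1)] cinner_self
        t_def p_def power_divide)
  moreover have "p / (K\<^sup>2)\<^sup>2 \<le> t / K\<^sup>2"
    using divide_right_mono[OF \<open>p \<le> K\<^sup>2 * t\<close>, of "(K\<^sup>2)\<^sup>2"] assms(2)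
    by (simp add: power2_eq_square)
  moreover have "(norm h)\<^sup>2 / (K * L)\<^sup>2 \<le> t / K\<^sup>2"
    using divide_right_mono[OF \<open>(norm h)\<^sup>2 \<le> L\<^sup>2 * t\<close>, of "(K * L)\<^sup>2"] assms(2,4)
    by (simp add: power_mult_distrib)
  ultimately have "(norm (h - scaleR (1 / K\<^sup>2) (adjoint T (T h))))\<^sup>2
      \<le> (1 - 1 / (K * L)\<^sup>2) * (norm h)\<^sup>2"
    by (simp add: left_diff_distrib)
  then have "norm (h - scaleR (1 / K\<^sup>2) (adjoint T (T h))) \<le> sqrt ((1 - 1 / (K * L)\<^sup>2) * (norm h)\<^sup>2)"
    by (rule real_le_rsqrt)
  then show ?thesis
    by (simp add: real_sqrt_mult)
qed

lemma scaled_gram_contraction_exists: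
  fixes T :: "'h::chilbert \<Rightarrow> 'h"
  assumes "bounded_op T" "\<And>h. norm h \<le> L * norm (T h)"
  shows "\<exists>K r. 0 < K \<and> 0 \<le> r \<and> r < 1 \<and>
           (\<forall>h. norm (h - scaleR (1 / K\<^sup>2) (adjoint T (T h))) \<le> r * norm h)"
proof -
  obtain K0 where K0: "\<And>x. norm (adjoint T x) \<le> norm x * K0"
    using bounded_linear.bounded[OF bounded_op_bounded_linear[OF bounded_op_adjoint[OF assms(1)]]]
    by blast
  define K where "K = max 1 K0"
  have K: "1 \<le> K" "norm (adjoint T x) \<le> K * norm x" for x
    unfolding K_def using K0[of x] mult_left_mono[OF max.cobounded2[of K0 1] norm_ge_zero[of x]]
    by (simp_all add: mult.commute)
  define L' where "L' = max 1 L"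
  have L': "1 \<le> L'" "norm h \<le> L' * norm (T h)" for h
    unfolding L'_def using assms(2)[of h] mult_right_mono[OF max.cobounded2[of L 1] norm_ge_zero[of "T h"]]
    by simp_all
  have "1 \<le> (K * L')\<^sup>2"
    using mult_mono[of 1 K 1 L'] K(1) L'(1) by (simp add: one_le_power)
  then have "0 < 1 / (K * L')\<^sup>2" "1 / (K * L')\<^sup>2 \<le> 1"
    using K(1) L'(1) by simp_all
  then have "0 \<le> sqrt (1 - 1 / (K * L')\<^sup>2)" "sqrt (1 - 1 / (K * L')\<^sup>2) < 1"
    by simp_all
  moreover have "0 < K"
    using K(1) by simp
  ultimately show ?thesis
    using norm_id_minus_scaled_gram_le[OF assms(1) K L'] by blast
qed

lemma gram_sqrt_exists:
  fixes T :: "'h::chilbert \<Rightarrow> 'h"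
  assumes "bounded_op T" "\<And>h. norm h \<le> L * norm (T h)"
  shows "\<exists>S. bounded_op S \<and> selfadjoint S \<and> (\<forall>h. S (S h) = adjoint T (T h)) \<and>
           (\<forall>C. bounded_op C \<longrightarrow> (\<forall>h. C (adjoint T (T h)) = adjoint T (T (C h))) \<longrightarrow>
              (\<forall>h. C (S h) = S (C h)))"
proof -
  obtain K r where "0 < K" "0 \<le> r" "r < 1"
    and contraction: "\<And>h. norm (h - scaleR (1 / K\<^sup>2) (adjoint T (T h))) \<le> r * norm h"
    using scaled_gram_contraction_exists[OF assms] by blast
  \<comment> \<open>\<open>T\<^sup>* T = K\<^sup>2 (id - Q)\<close> with \<open>\<parallel>Q\<parallel> \<le> r < 1\<close>\<close>
  define Q where "Q h = h - scaleR (1 / K\<^sup>2) (adjoint T (T h))" for h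
  have "bounded_op Q"
    unfolding Q_def
    using bounded_op_compose[OF bounded_op_adjoint[OF assms(1)] assms(1)]
    by (intro bounded_op_diff[OF bounded_op_ident] bounded_op_scaleR)
  moreover have "selfadjoint Q"
    by (simp add: selfadjoint_def Q_def cinner_left.diff cinner_right.diff cinner_scaleR_left
        cinner_scaleR_right cinner_adjoint[OF assms(1)] cinner_adjoint_right[OF assms(1)])
  moreover have "norm (Q h) \<le> r * norm h" for h
    unfolding Q_def by (rule contraction)
  ultimately have "\<exists>R. bounded_op R \<and> selfadjoint R \<and> (\<forall>h. R (R h) = h - Q h) \<and>
      (\<forall>C. bounded_op C \<longrightarrow> (\<forall>h. C (Q h) = Q (C h)) \<longrightarrow> (\<forall>h. C (R h) = R (C h)))"
    using \<open>0 \<le> r\<close> \<open>r < 1\<close> by (rule sqrt_id_minus_exists)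
  then obtain R where R: "bounded_op R" "selfadjoint R" "\<And>h. R (R h) = h - Q h"
    and R_commute: "\<And>C. bounded_op C \<Longrightarrow> \<forall>h. C (Q h) = Q (C h) \<Longrightarrow> \<forall>h. C (R h) = R (C h)"
    by blast
  define S where "S h = scaleR K (R h)" for h
  have "bounded_op S"
    unfolding S_def by (rule bounded_op_scaleR[OF R(1)])
  moreover have "selfadjoint S"
    using R(2) by (simp add: selfadjoint_def S_def cinner_scaleR_left cinner_scaleR_right)
  moreover have "S (S h) = adjoint T (T h)" for h
    using \<open>0 < K\<close>
    by (simp add: S_def R(3) Q_def linear_scale[OF bounded_op_linear[OF R(1)]] power2_eq_square)
  moreover have "C (S h) = S (C h)"
    if "bounded_op C" "\<And>h. C (adjoint T (T h)) = adjoint T (T (C h))" for C h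
  proof -
    have "C (Q h) = Q (C h)" for h
      using that by (simp add: Q_def linear_diff linear_scale bounded_op_linear)
    then have "C (R h) = R (C h)"
      using R_commute[OF that(1)] by blast
    then show ?thesis
      using that(1) by (simp add: S_def linear_scale bounded_op_linear)
  qed
  ultimately show ?thesis
    by blast
qed

lemma adjoint_compose:
  assumes "bounded_op A" "bounded_op (B::'h::chilbert \<Rightarrow> 'h)"
  shows "adjoint (\<lambda>h. A (B h)) = (\<lambda>h. adjoint B (adjoint A h))"
  by (rule adjoint_eqI) (simp add: cinner_adjoint assms)

lemma selfadjoint_adjoint: "bounded_op S \<Longrightarrow> selfadjoint S \<Longrightarrow> adjoint S = S"
  by (rule adjoint_eqI) (simp add: selfadjoint_def)

lemma adjoint_inverse:
  assumes "bounded_op T" "bounded_op (Ti::'h::chilbert \<Rightarrow> 'h)" "\<And>h. Ti (T h) = h" "\<And>h. T (Ti h) = h"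
  shows "adjoint Ti (adjoint T h) = h" "adjoint T (adjoint Ti h) = h"
  by (rule cinner_ext; simp add: cinner_adjoint_right assms)+

lemma unitary_op_polar_factor:
  assumes T: "bounded_op T" "bounded_op Ti" "\<And>h. Ti (T h) = h" "\<And>h. T (Ti h) = h"
    and S: "bounded_op S" "selfadjoint S" "\<And>h. S (S h) = adjoint T (T h)"
  shows "unitary_op (\<lambda>h. S (Ti h))"
proof -
  have adjoint_U: "adjoint (\<lambda>h. S (Ti h)) = (\<lambda>h. adjoint Ti (S h))"
    by (simp add: adjoint_compose selfadjoint_adjoint S T)
  \<comment> \<open>\<open>M\<close> inverts \<open>T\<^sup>* T = S\<^sup>2\<close>, hence commutes with \<open>S\<close>\<close>
  define M where "M h = Ti (adjoint Ti h)" for h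
  have "S (M h) = M (S h)" for h
  proof -
    have "S (M h) = M (adjoint T (T (S (M h))))"
      by (simp add: M_def T adjoint_inverse[OF T])
    also have "\<dots> = M (S (adjoint T (T (M h))))"
      by (simp flip: S(3))
    also have "\<dots> = M (S h)"
      by (simp add: M_def T adjoint_inverse[OF T])
    finally show ?thesis .
  qed
  then show ?thesis
    unfolding unitary_op_def using bounded_op_compose[OF S(1) T(2)]
    by (simp add: fun_eq_iff adjoint_U S(3) T adjoint_inverse[OF T] flip: M_def)
      (simp add: M_def T adjoint_inverse[OF T])
qed

lemma invertible_op_conj_eq_unitary_conj:
  fixes T :: "'h::chilbert \<Rightarrow> 'h"
  assumes "invertible_op T"
  shows "\<exists>U. unitary_op U \<and>
           (\<forall>C. bounded_op C \<longrightarrow> (\<forall>h. C (adjoint T (T h)) = adjoint T (T (C h))) \<longrightarrow>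
              (\<forall>h. T (C h) = adjoint U (C (U (T h)))))"
proof -
  obtain Ti where T: "bounded_op T" "bounded_op Ti" "\<And>h. Ti (T h) = h" "\<And>h. T (Ti h) = h"
    using assms by (auto simp: invertible_op_def fun_eq_iff)
  obtain L where L: "\<And>h. norm (Ti h) \<le> norm h * L"
    using bounded_linear.bounded[OF bounded_op_bounded_linear[OF T(2)]] by blast
  have "norm h \<le> L * norm (T h)" for h
    using L[of "T h"] by (simp add: T(3) mult.commute)
  then have "\<exists>S. bounded_op S \<and> selfadjoint S \<and> (\<forall>h. S (S h) = adjoint T (T h)) \<and>
      (\<forall>C. bounded_op C \<longrightarrow> (\<forall>h. C (adjoint T (T h)) = adjoint T (T (C h))) \<longrightarrow>
        (\<forall>h. C (S h) = S (C h)))"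
    by (rule gram_sqrt_exists[OF T(1)])
  then obtain S where S: "bounded_op S" "selfadjoint S" "\<And>h. S (S h) = adjoint T (T h)"
    and S_commute: "\<And>C. bounded_op C \<Longrightarrow> \<forall>h. C (adjoint T (T h)) = adjoint T (T (C h)) \<Longrightarrow>
        \<forall>h. C (S h) = S (C h)"
    by blast
  \<comment> \<open>with \<open>S = |T|\<close>, \<open>U = S T\<^sup>-\<^sup>1\<close> is the unitary factor of the polar decomposition \<open>T = U\<^sup>* S\<close>\<close>
  have "T (C h) = adjoint (\<lambda>h. S (Ti h)) (C (S (Ti (T h))))"
    if "bounded_op C" "\<And>h. C (adjoint T (T h)) = adjoint T (T (C h))" for C h
    using S_commute[OF that(1)] that(2)
    by (simp add: adjoint_compose selfadjoint_adjoint S T adjoint_inverse[OF T])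
  then show ?thesis
    using unitary_op_polar_factor[OF T S] by blast
qed

section \<open>Completely positive maps\<close>

lemma cstar_one [simp]: "cstar (1::'a::cstar_algebra) = 1"
  by (metis cstar_cstar cstar_mult mult.left_neutral mult.right_neutral)

lemma cp_map_bounded_op: "cp_map \<phi> \<Longrightarrow> bounded_op (\<phi> a)"
  by (simp add: cp_map_def)

lemma cp_map_unit_nonneg:
  assumes "cp_map (\<phi>::'a::cstar_algebra \<Rightarrow> 'h::chilbert \<Rightarrow> 'h)"
  shows "0 \<le> Re (cinner h (\<phi> 1 h))"
  using assms unfolding cp_map_def
  by (auto dest!: spec[of _ 1] spec[of _ "\<lambda>_ _. 1"] spec[of _ "\<lambda>_. h"] simp: Let_def)

lemma cp_map_2x2:
  fixes \<phi> :: "'a::cstar_algebra \<Rightarrow> 'h::chilbert \<Rightarrow> 'h" and h1 h2 :: 'h and x :: 'a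
  assumes "cp_map \<phi>"
  defines "s \<equiv> cinner h1 (\<phi> 1 h1) + cinner h1 (\<phi> x h2) + cinner h2 (\<phi> (cstar x) h1)
      + cinner h2 (\<phi> (cstar x * x) h2)"
  shows "Im s = 0" and "0 \<le> Re s"
proof -
  \<comment> \<open>\<open>B = [[1, x], [0, 0]]\<close>, so \<open>B\<^sup>* B = [[1, x], [x\<^sup>*, x\<^sup>* x]]\<close>\<close>
  define B where "B k j = (if k = 0 then if j = 0 then 1 else x else 0)" for k j :: nat
  define h where "h i = (if i = 0 then h1 else h2)" for i :: nat
  have "s = (\<Sum>i<2. \<Sum>j<2. cinner (h i) (\<phi> (\<Sum>k<2. cstar (B k i) * B k j) (h j)))"
    by (simp add: s_def numeral_2_eq_2 B_def h_def)
  then show "Im s = 0" "0 \<le> Re s"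
    using assms(1) unfolding cp_map_def Let_def
    by (auto simp: complex_is_Real_iff dest!: spec[of _ 2] spec[of _ B] spec[of _ h])
qed

definition star_preserving :: "('a::cstar_algebra \<Rightarrow> 'h::chilbert \<Rightarrow> 'h) \<Rightarrow> bool" where
  "star_preserving \<phi> \<longleftrightarrow> (\<forall>x k y. cinner k (\<phi> (cstar x) y) = cinner (\<phi> x k) y)"

lemma star_preservingD:
  "star_preserving \<phi> \<Longrightarrow> cinner k (\<phi> (cstar x) y) = cinner (\<phi> x k) y"
  by (simp add: star_preserving_def)

lemma star_preservingD':
  "star_preserving \<phi> \<Longrightarrow> cinner k (\<phi> x y) = cinner (\<phi> (cstar x) k) y"
  by (metis star_preservingD cstar_cstar)

lemma cp_map_star_preserving:
  assumes cp: "cp_map (\<phi>::'a::cstar_algebra \<Rightarrow> 'h::chilbert \<Rightarrow> 'h)"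
  shows "star_preserving \<phi>"
  unfolding star_preserving_def
proof (intro allI)
  fix x k y
  have lin: "linear (\<phi> a)" "\<phi> a (scaleC c v) = scaleC c (\<phi> a v)" for a c v
    using cp_map_bounded_op[OF cp] by (simp_all add: bounded_op_linear bounded_op_scaleC)
  have Im_sum: "Im (cinner h1 (\<phi> x k) + cinner k (\<phi> (cstar x) h1)) = 0" for h1
    using cp_map_2x2(1)[OF cp, of h1 x k] cp_map_2x2(1)[OF cp, of h1 x "- k"]
    by (simp add: linear_neg lin cinner_left.minus cinner_right.minus)
  define z where "z = cinner y (\<phi> x k)"
  define w where "w = cinner k (\<phi> (cstar x) y)"
  have "Im (z + w) = 0"
    using Im_sum[of y] by (simp add: z_def w_def)
  moreover have "Im (- \<i> * z + \<i> * w) = 0"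
    using Im_sum[of "scaleC \<i> y"] by (simp add: z_def w_def lin cinner_scaleC_left cinner_scaleC_right)
  ultimately have "w = cnj z"
    by (simp add: complex_eq_iff)
  then show "cinner k (\<phi> (cstar x) y) = cinner (\<phi> x k) y"
    by (metis w_def z_def cinner_commute)
qed

lemma cp_map_Kadison_Schwarz:
  assumes cp: "cp_map (\<phi>::'a::cstar_algebra \<Rightarrow> 'h::chilbert \<Rightarrow> 'h)"
    and unit_le: "\<And>y. Re (cinner y (\<phi> 1 y)) \<le> (norm y)\<^sup>2"
  shows "(norm (\<phi> x k))\<^sup>2 \<le> Re (cinner k (\<phi> (cstar x * x) k))"
proof -
  define y where "y = \<phi> x k"
  have "linear (\<phi> a)" for a
    using cp_map_bounded_op[OF cp] by (simp add: bounded_op_linear)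
  then have "0 \<le> Re (cinner y (\<phi> 1 y)) - 2 * (norm y)\<^sup>2 + Re (cinner k (\<phi> (cstar x * x) k))"
    using cp_map_2x2(2)[OF cp, of "- y" x k] cp_map_star_preserving[OF cp]
    by (simp add: star_preserving_def linear_neg cinner_left.minus cinner_right.minus y_def
        cinner_self_Re)
  then show ?thesis
    using unit_le[of y] by (simp add: y_def)
qed

section \<open>Instruments\<close>

lemma complex_countably_additive_empty:
  assumes "complex_countably_additive M \<mu>"
  shows "\<mu> {} = 0"
proof -
  have "(\<lambda>n::nat. \<mu> {}) sums \<mu> {}"
    using assms unfolding complex_countably_additive_def
    by (auto dest!: spec[of _ "\<lambda>_. {}"] simp: disjoint_family_on_def)
  then have "summable (\<lambda>n::nat. \<mu> {})"
    by (rule sums_summable)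
  then show ?thesis
    by (simp add: summable_const_iff)
qed

lemma complex_countably_additive_Un:
  assumes "complex_countably_additive M \<mu>" "A \<in> sets M" "B \<in> sets M" "A \<inter> B = {}"
  shows "\<mu> (A \<union> B) = \<mu> A + \<mu> B"
proof -
  define F where "F n = (if n = 0 then A else if n = 1 then B else {})" for n :: nat
  have "range F \<subseteq> sets M"
    using assms(2,3) by (auto simp: F_def)
  moreover have "disjoint_family F"
    using assms(4) by (auto simp: disjoint_family_on_def F_def)
  ultimately have "(\<lambda>n. \<mu> (F n)) sums \<mu> (\<Union>n. F n)"
    using assms(1) unfolding complex_countably_additive_def by blast
  moreover have "(\<Union>n. F n) = A \<union> B"
    by (auto simp: F_def split: if_splits)
  moreover have "(\<lambda>n. \<mu> (F n)) sums (\<Sum>n\<in>{0, 1}. \<mu> (F n))"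
    by (rule sums_finite) (auto simp: F_def complex_countably_additive_empty[OF assms(1)])
  ultimately show ?thesis
    by (simp add: F_def sums_unique2)
qed

lemma ucp_instrument_unit_le:
  assumes "ucp_instrument M J" "A \<in> sets M"
  shows "Re (cinner y (J A 1 y)) \<le> (norm y)\<^sup>2"
proof -
  define \<mu> where "\<mu> = (\<lambda>B. cinner y (J B 1 y))"
  have "complex_countably_additive M \<mu>"
    using assms(1) by (simp add: ucp_instrument_def cp_instrument_def \<mu>_def)
  moreover have "space M - A \<in> sets M" "A \<union> (space M - A) = space M"
    using assms(2) sets.sets_into_space by auto
  ultimately have "\<mu> A + \<mu> (space M - A) = \<mu> (space M)"
    using complex_countably_additive_Un[of M \<mu> A "space M - A"] assms(2) by auto
  also have "\<mu> (space M) = cinner y y"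
    using assms(1) by (simp add: \<mu>_def ucp_instrument_def)
  finally have "Re (\<mu> A) + Re (\<mu> (space M - A)) = (norm y)\<^sup>2"
    by (metis cinner_self_Re plus_complex.sel(1))
  moreover have "0 \<le> Re (\<mu> (space M - A))"
    unfolding \<mu>_def using assms(1) \<open>space M - A \<in> sets M\<close>
    by (intro cp_map_unit_nonneg) (simp add: ucp_instrument_def cp_instrument_def)
  ultimately show ?thesis
    by (simp add: \<mu>_def)
qed

lemma spectral_instrument_cp_map:
  "spectral_instrument M I \<Longrightarrow> A \<in> sets M \<Longrightarrow> cp_map (I A)"
  by (simp add: spectral_instrument_def ucp_instrument_def cp_instrument_def)

lemma spectral_instrument_norm_squared:
  assumes "spectral_instrument M I" "A \<in> sets M"
  shows "(norm (I A a h))\<^sup>2 = Re (cinner h (I A (cstar a * a) h))"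
  using assms cp_map_bounded_op[OF spectral_instrument_cp_map[OF assms]]
  by (simp add: spectral_instrument_def cinner_adjoint_right cinner_self_Re)

section \<open>Intertwining\<close>

lemma cinner_sum_adjoint:
  assumes "\<And>j. j \<in> J \<Longrightarrow> bounded_op (T j)"
  shows "cinner x (\<Sum>j\<in>J. adjoint (T j) (y j)) = (\<Sum>j\<in>J. cinner (T j x) (y j))"
  using assms by (simp add: cinner_right.sum cinner_adjoint_right)

lemma sum_norm_squared_isometry:
  assumes "\<And>j. j \<in> J \<Longrightarrow> bounded_op (T j)" "\<And>h. (\<Sum>j\<in>J. adjoint (T j) (T j h)) = h"
  shows "(\<Sum>j\<in>J. (norm (T j v))\<^sup>2) = (norm v)\<^sup>2"
proof -
  have "cinner v (\<Sum>j\<in>J. adjoint (T j) (T j v)) = (\<Sum>j\<in>J. cinner (T j v) (T j v))"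
    by (rule cinner_sum_adjoint[OF assms(1)])
  then show ?thesis
    by (simp add: assms(2) cinner_self_Re[symmetric])
qed

text \<open>The Kadison-Schwarz inequalities of the \<open>\<psi>\<^sub>j\<close> and the multiplicativity of \<open>\<phi>\<close> at \<open>a\<close>
  combine to \<open>\<Sum>\<^sub>j \<parallel>T\<^sub>j (\<phi> a h) - \<psi>\<^sub>j a (T\<^sub>j h)\<parallel>\<^sup>2 \<le> 0\<close>.\<close>

lemma compression_intertwines:
  fixes \<phi> :: "'a::cstar_algebra \<Rightarrow> 'h::chilbert \<Rightarrow> 'h" and \<psi> :: "nat \<Rightarrow> 'a \<Rightarrow> 'h \<Rightarrow> 'h"
  assumes T: "\<And>j. j < n \<Longrightarrow> bounded_op (T j)"
    and T_sum: "\<And>h. (\<Sum>j<n. adjoint (T j) (T j h)) = h"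
    and \<phi>: "\<And>b h. \<phi> b h = (\<Sum>j<n. adjoint (T j) (\<psi> j b (T j h)))"
    and \<psi>_KS: "\<And>j k. j < n \<Longrightarrow> (norm (\<psi> j a k))\<^sup>2 \<le> Re (cinner k (\<psi> j (cstar a * a) k))"
    and \<phi>_mult: "(norm (\<phi> a h))\<^sup>2 = Re (cinner h (\<phi> (cstar a * a) h))"
    and "i < n"
  shows "\<psi> i a (T i h) = T i (\<phi> a h)"
proof -
  have T': "\<And>j. j \<in> {..<n} \<Longrightarrow> bounded_op (T j)"
    using T by simp
  define v where "v = \<phi> a h"
  define w where "w j = \<psi> j a (T j h)" for j
  have "(\<Sum>j<n. (norm (w j))\<^sup>2) \<le> (\<Sum>j<n. Re (cinner (T j h) (\<psi> j (cstar a * a) (T j h))))"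
    by (rule sum_mono) (simp add: w_def \<psi>_KS)
  also have "\<dots> = (norm v)\<^sup>2"
  proof -
    have "cinner h (\<phi> (cstar a * a) h) = (\<Sum>j<n. cinner (T j h) (\<psi> j (cstar a * a) (T j h)))"
      unfolding \<phi>[of "cstar a * a"] by (rule cinner_sum_adjoint[OF T'])
    then show ?thesis
      by (simp add: v_def \<phi>_mult)
  qed
  finally have "(\<Sum>j<n. (norm (w j))\<^sup>2) \<le> (norm v)\<^sup>2" .
  moreover have "(\<Sum>j<n. Re (cinner (T j v) (w j))) = (norm v)\<^sup>2"
  proof -
    have "cinner v (\<phi> a h) = (\<Sum>j<n. cinner (T j v) (\<psi> j a (T j h)))"
      unfolding \<phi>[of a h] by (rule cinner_sum_adjoint[OF T'])
    then show ?thesis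
      by (simp add: v_def w_def cinner_self_Re[symmetric])
  qed
  moreover have "(\<Sum>j<n. (norm (T j v))\<^sup>2) = (norm v)\<^sup>2"
    using T' T_sum by (rule sum_norm_squared_isometry)
  moreover have "(\<Sum>j<n. (norm (T j v - w j))\<^sup>2)
      = (\<Sum>j<n. (norm (T j v))\<^sup>2) - 2 * (\<Sum>j<n. Re (cinner (T j v) (w j))) + (\<Sum>j<n. (norm (w j))\<^sup>2)"
    by (simp add: norm_diff_squared sum.distrib sum_subtractf sum_distrib_left)
  ultimately have "(\<Sum>j<n. (norm (T j v - w j))\<^sup>2) \<le> 0"
    by linarith
  then have "(\<Sum>j<n. (norm (T j v - w j))\<^sup>2) = 0"
    by (intro antisym sum_nonneg) simp_all
  then have "(norm (T i v - w i))\<^sup>2 = 0"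
    using \<open>i < n\<close> by (subst (asm) sum_nonneg_eq_0_iff) simp_all
  then show ?thesis
    by (simp add: v_def w_def)
qed

lemma intertwiner_gram_commute:
  assumes "bounded_op T" "star_preserving \<phi>" "star_preserving \<psi>" "\<And>x h. \<psi> x (T h) = T (\<phi> x h)"
  shows "\<phi> x (adjoint T (T h)) = adjoint T (T (\<phi> x h))"
proof (rule cinner_ext)
  fix u
  have "cinner u (\<phi> x (adjoint T (T h))) = cinner (\<phi> (cstar x) u) (adjoint T (T h))"
    by (rule star_preservingD'[OF assms(2)])
  also have "\<dots> = cinner (\<psi> (cstar x) (T u)) (T h)"
    by (simp add: cinner_adjoint_right assms(1,4))
  also have "\<dots> = cinner (T u) (\<psi> x (T h))"
    by (rule star_preservingD'[OF assms(3), symmetric])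
  also have "\<dots> = cinner u (adjoint T (T (\<phi> x h)))"
    by (simp add: cinner_adjoint_right assms(1,4))
  finally show "cinner u (\<phi> x (adjoint T (T h))) = cinner u (adjoint T (T (\<phi> x h)))" .
qed

lemma intertwined_unitarily_equivalent:
  fixes I J :: "'x set \<Rightarrow> 'a::cstar_algebra \<Rightarrow> 'h::chilbert \<Rightarrow> 'h"
  assumes "invertible_op T"
    and cp: "\<And>A. A \<in> sets M \<Longrightarrow> cp_map (I A)" "\<And>A. A \<in> sets M \<Longrightarrow> cp_map (J A)"
    and intertwines: "\<And>A a h. A \<in> sets M \<Longrightarrow> J A a (T h) = T (I A a h)"
  shows "\<exists>U. unitary_op U \<and> (\<forall>A\<in>sets M. \<forall>a. J A a = (\<lambda>h. adjoint U (I A a (U h))))"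
proof -
  obtain Ti where T: "bounded_op T" "\<And>h. T (Ti h) = h"
    using assms(1) by (auto simp: invertible_op_def fun_eq_iff)
  obtain U where "unitary_op U" and U: "\<forall>C. bounded_op C \<longrightarrow>
      (\<forall>h. C (adjoint T (T h)) = adjoint T (T (C h))) \<longrightarrow> (\<forall>h. T (C h) = adjoint U (C (U (T h))))"
    using invertible_op_conj_eq_unitary_conj[OF assms(1)] by (elim exE conjE)
  have "J A a h = adjoint U (I A a (U h))" if "A \<in> sets M" for A a h
  proof -
    have "I A a (adjoint T (T h)) = adjoint T (T (I A a h))" for h
      using T(1) cp_map_star_preserving[OF cp(1)[OF that]] cp_map_star_preserving[OF cp(2)[OF that]]
        intertwines[OF that]
      by (rule intertwiner_gram_commute[of T "I A" "J A"])
    then have "T (I A a (Ti h)) = adjoint U (I A a (U (T (Ti h))))"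
      using U cp_map_bounded_op[OF cp(1)[OF that], of a] by blast
    then show ?thesis
      using intertwines[OF that, of a "Ti h"] by (simp add: T(2))
  qed
  then show ?thesis
    using \<open>unitary_op U\<close> by (auto intro!: exI[of _ U])
qed

lemma spectral_compression_unitarily_equivalent:
  fixes I :: "'x set \<Rightarrow> 'a::cstar_algebra \<Rightarrow> 'h::chilbert \<Rightarrow> 'h"
    and Is :: "nat \<Rightarrow> 'x set \<Rightarrow> 'a \<Rightarrow> 'h \<Rightarrow> 'h"
  assumes "spectral_instrument M I"
    and Is: "\<And>j. j < n \<Longrightarrow> ucp_instrument M (Is j)"
    and T: "\<And>j. j < n \<Longrightarrow> invertible_op (T j)"
    and T_sum: "\<And>h. (\<Sum>j<n. adjoint (T j) (T j h)) = h"
    and I_eq: "\<And>A a h. A \<in> sets M \<Longrightarrow> I A a h = (\<Sum>j<n. adjoint (T j) (Is j A a (T j h)))"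
    and "i < n"
  shows "\<exists>U. unitary_op U \<and> (\<forall>A\<in>sets M. \<forall>a. Is i A a = (\<lambda>h. adjoint U (I A a (U h))))"
proof (rule intertwined_unitarily_equivalent)
  have Is_cp: "cp_map (Is j A)" if "j < n" "A \<in> sets M" for j A
    using Is[OF that(1)] that(2) by (simp add: ucp_instrument_def cp_instrument_def)
  have T_bounded: "bounded_op (T j)" if "j < n" for j
    using T[OF that] by (simp add: invertible_op_def)
  have Is_KS: "(norm (Is j A a k))\<^sup>2 \<le> Re (cinner k (Is j A (cstar a * a) k))"
    if "j < n" "A \<in> sets M" for j A a k
    using Is that by (intro cp_map_Kadison_Schwarz Is_cp ucp_instrument_unit_le) auto
  show "Is i A a (T i h) = T i (I A a h)" if "A \<in> sets M" for A a h
    using T_bounded T_sum I_eq[OF that] Is_KS[OF _ that]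
      spectral_instrument_norm_squared[OF assms(1) that] \<open>i < n\<close>
    by (rule compression_intertwines[where \<phi>="I A" and \<psi>="\<lambda>j. Is j A"])
  show "cp_map (Is i A)" if "A \<in> sets M" for A
    using Is_cp \<open>i < n\<close> that .
qed (use T \<open>i < n\<close> spectral_instrument_cp_map[OF assms(1)] in auto)

theorem corollary3p9:
  fixes M :: "'x measure"
    and I :: "'x set \<Rightarrow> 'a::cstar_algebra \<Rightarrow> 'h::chilbert \<Rightarrow> 'h"
  assumes "spectral_instrument M I"
  shows "cstar_extreme M I"
  unfolding cstar_extreme_def
proof (intro allI impI, elim conjE)
  fix n and Is :: "nat \<Rightarrow> 'x set \<Rightarrow> 'a \<Rightarrow> 'h \<Rightarrow> 'h" and T :: "nat \<Rightarrow> 'h \<Rightarrow> 'h"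
  assume Is_T: "\<forall>i<n. ucp_instrument M (Is i) \<and> invertible_op (T i)"
    and T_sum: "(\<lambda>h. \<Sum>i<n. adjoint (T i) (T i h)) = id"
    and I_eq: "\<forall>A\<in>sets M. \<forall>a. I A a = (\<lambda>h. \<Sum>i<n. adjoint (T i) (Is i A a (T i h)))"
  have "\<forall>i\<in>{..<n}. \<exists>U. unitary_op U \<and> (\<forall>A\<in>sets M. \<forall>a. Is i A a = (\<lambda>h. adjoint U (I A a (U h))))"
  proof
    fix i
    assume "i \<in> {..<n}"
    then show "\<exists>U. unitary_op U \<and> (\<forall>A\<in>sets M. \<forall>a. Is i A a = (\<lambda>h. adjoint U (I A a (U h))))"
      using Is_T fun_cong[OF T_sum] I_eq
      by (intro spectral_compression_unitarily_equivalent[OF assms, where n=n and T=T]) auto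
  qed
  then obtain U where "\<forall>i\<in>{..<n}. unitary_op (U i) \<and>
      (\<forall>A\<in>sets M. \<forall>a. Is i A a = (\<lambda>h. adjoint (U i) (I A a (U i h))))"
    by (elim bchoice[THEN exE])
  then show "\<exists>U. \<forall>i<n. unitary_op (U i) \<and>
      (\<forall>A\<in>sets M. \<forall>a. Is i A a = (\<lambda>h. adjoint (U i) (I A a (U i h))))"
    by (intro exI[of _ U]) simp
qed

end
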